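(* Let $X$ and $Y$ be CW complexes and $k\ge 0$. Then the map $$\hat p_k:\hat G_k(X\times Y)=\bigcup_{i+j=k}G_iX\times G_jY\longrightarrow X\times Y,$$ given on $G_iX\times G_jY$ by $p_i^X\times p_j^Y$, is a Serre fibration.
   Context: For a path-connected space $X$, $p_0^X:G_0X\to X$ is the fibration obtained by converting the inclusion of a base point into a fibration (the path fibration). For fibrations $f_l:X_l\to B$, the fiberwise join $X_0*_B\cdots*_BX_n$ is the subspace of the join $X_0*\cdots*X_n$ consisting of formal combinations $t_0x_0+\cdots+t_nx_n$ ($t_l\ge0$, $\sum t_l=1$, terms with $t_l=0$ dropped) with all $f_l(x_l)$ equal, mapping to this common point. The $n$-th Ganea space $G_nX$ is the fiberwise join of $n+1$ copies of $G_0X$ over $X$, and $p_n^X:G_nX\to X$ is the $n$-th Ganea fibration; there are natural inclusions $G_0X\subset G_1X\subset\cdots$ with $p_n^X$ the restriction of $p_{n+1}^X$. Thus $\hat G_k(X\times Y)\subset G_kX\times G_kY$. A Serre fibration is a map with the homotopy lifting property for all CW complexes. *)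

theory Defs
  imports "HOL-Analysis.Analysis"
begin

definition disk :: "nat \<Rightarrow> (nat \<Rightarrow> real) set" where
  "disk n = {v. (\<forall>i\<ge>n. v i = 0) \<and> (\<Sum>i<n. (v i)\<^sup>2) \<le> 1}"

definition open_disk :: "nat \<Rightarrow> (nat \<Rightarrow> real) set" where
  "open_disk n = {v. (\<forall>i\<ge>n. v i = 0) \<and> (\<Sum>i<n. (v i)\<^sup>2) < 1}"

definition sphere_bd :: "nat \<Rightarrow> (nat \<Rightarrow> real) set" where
  "sphere_bd n = {v. (\<forall>i\<ge>n. v i = 0) \<and> (\<Sum>i<n. (v i)\<^sup>2) = 1}"

definition disk_top :: "nat \<Rightarrow> (nat \<Rightarrow> real) topology" where
  "disk_top n = subtopology (powertop_real UNIV) (disk n)"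

definition cw_complex :: "'a topology \<Rightarrow> bool" where
  "cw_complex X \<longleftrightarrow> Hausdorff_space X \<and>
    (\<exists>(C :: 'a set set) (dim :: 'a set \<Rightarrow> nat) (\<Phi> :: 'a set \<Rightarrow> (nat \<Rightarrow> real) \<Rightarrow> 'a).
       \<Union>C = topspace X \<and> {} \<notin> C \<and> pairwise disjnt C \<and>
       (\<forall>e\<in>C. continuous_map (disk_top (dim e)) X (\<Phi> e)
             \<and> \<Phi> e ` open_disk (dim e) = e
             \<and> homeomorphic_map (subtopology (disk_top (dim e)) (open_disk (dim e)))
                                 (subtopology X e) (\<Phi> e)
             \<and> (\<exists>F\<subseteq>C. finite F \<and> (\<forall>e'\<in>F. dim e' < dim e)
                       \<and> \<Phi> e ` sphere_bd (dim e) \<subseteq> \<Union>F)) \<and>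
       (\<forall>A\<subseteq>topspace X.
          (\<forall>e\<in>C. closedin (subtopology X (X closure_of e)) (A \<inter> X closure_of e))
          \<longrightarrow> closedin X A))"

abbreviation unit_interval_top :: "real topology" where
  "unit_interval_top \<equiv> top_of_set {0..1}"

definition homotopy_lifting :: "'c topology \<Rightarrow> 'e topology \<Rightarrow> 'b topology \<Rightarrow> ('e \<Rightarrow> 'b) \<Rightarrow> bool" where
  "homotopy_lifting K E B p \<longleftrightarrow>
    (\<forall>f H. continuous_map K E f
       \<and> continuous_map (prod_topology K unit_interval_top) B H
       \<and> (\<forall>k\<in>topspace K. H (k, 0) = p (f k))
       \<longrightarrow> (\<exists>H'. continuous_map (prod_topology K unit_interval_top) E H'
              \<and> (\<forall>z\<in>topspace (prod_topology K unit_interval_top). p (H' z) = H z)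
              \<and> (\<forall>k\<in>topspace K. H' (k, 0) = f k)))"

text \<open>The CW complexes are
 taken on the type given by the first argument; stating the result for a free type variable
 quantifies over all types.\<close>

definition serre_fibration :: "'c itself \<Rightarrow> 'e topology \<Rightarrow> 'b topology \<Rightarrow> ('e \<Rightarrow> 'b) \<Rightarrow> bool" where
  "serre_fibration (ty :: 'c itself) E B p \<longleftrightarrow>
     continuous_map E B p \<and>
     (\<forall>K :: 'c topology. cw_complex K \<longrightarrow> homotopy_lifting K E B p)"

definition path_pts :: "'a topology \<Rightarrow> 'a \<Rightarrow> (real \<Rightarrow> 'a) set" where
  "path_pts X x0 = {w. pathin X w \<and> w 0 = x0 \<and> (\<forall>t. t \<notin> {0..1} \<longrightarrow> w t = undefined)}"

definition path_space :: "'a topology \<Rightarrow> 'a \<Rightarrow> (real \<Rightarrow> 'a) topology" where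
  "path_space X x0 = subtopology
     (topology_generated_by {{w. w ` K \<subseteq> U} | K U. compactin unit_interval_top K \<and> openin X U})
     (path_pts X x0)"

definition path_end :: "(real \<Rightarrow> 'a) \<Rightarrow> 'a" where
  "path_end w = w 1"

text \<open>A point t_0 x_0 + ... + t_n x_n is a pair (t, x) with t l = 0 for l > n,
 and x l = undefined whenever t l = 0 (the dropped terms).\<close>

definition fjoin_pts :: "'e topology \<Rightarrow> ('e \<Rightarrow> 'b) \<Rightarrow> nat \<Rightarrow> ((nat \<Rightarrow> real) \<times> (nat \<Rightarrow> 'e)) set" where
  "fjoin_pts E f n = {(t, x). (\<forall>l. 0 \<le> t l) \<and> (\<forall>l>n. t l = 0) \<and> (\<Sum>l\<le>n. t l) = 1
      \<and> (\<forall>l. t l = 0 \<longrightarrow> x l = undefined) \<and> (\<forall>l. t l \<noteq> 0 \<longrightarrow> x l \<in> topspace E)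
      \<and> (\<forall>l l'. t l \<noteq> 0 \<and> t l' \<noteq> 0 \<longrightarrow> f (x l) = f (x l'))}"

definition fjoin :: "'e topology \<Rightarrow> ('e \<Rightarrow> 'b) \<Rightarrow> nat \<Rightarrow> ((nat \<Rightarrow> real) \<times> (nat \<Rightarrow> 'e)) topology" where
  "fjoin E f n = topology_generated_by
     ({{z \<in> fjoin_pts E f n. fst z l \<in> U} | l U. open U}
      \<union> {{z \<in> fjoin_pts E f n. fst z l \<noteq> 0 \<and> snd z l \<in> V} | l V. openin E V})"

definition fjoin_proj :: "('e \<Rightarrow> 'b) \<Rightarrow> (nat \<Rightarrow> real) \<times> (nat \<Rightarrow> 'e) \<Rightarrow> 'b" where
  "fjoin_proj f z = f (snd z (LEAST l. fst z l \<noteq> 0))"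

definition ganea :: "'a topology \<Rightarrow> 'a \<Rightarrow> nat \<Rightarrow> ((nat \<Rightarrow> real) \<times> (nat \<Rightarrow> (real \<Rightarrow> 'a))) topology" where
  "ganea X x0 n = fjoin (path_space X x0) path_end n"

definition ganea_fib :: "(nat \<Rightarrow> real) \<times> (nat \<Rightarrow> (real \<Rightarrow> 'a)) \<Rightarrow> 'a" where
  "ganea_fib z = fjoin_proj path_end z"

definition ganea_prod :: "'a topology \<Rightarrow> 'a \<Rightarrow> 'b topology \<Rightarrow> 'b \<Rightarrow> nat \<Rightarrow>
    (((nat \<Rightarrow> real) \<times> (nat \<Rightarrow> (real \<Rightarrow> 'a))) \<times> ((nat \<Rightarrow> real) \<times> (nat \<Rightarrow> (real \<Rightarrow> 'b)))) topology" where
  "ganea_prod X x0 Y y0 k = subtopology (prod_topology (ganea X x0 k) (ganea Y y0 k))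
     (\<Union>i\<le>k. topspace (ganea X x0 i) \<times> topspace (ganea Y y0 (k - i)))"

definition ganea_prod_fib ::
  "((nat \<Rightarrow> real) \<times> (nat \<Rightarrow> (real \<Rightarrow> 'a))) \<times> ((nat \<Rightarrow> real) \<times> (nat \<Rightarrow> (real \<Rightarrow> 'b))) \<Rightarrow> 'a \<times> 'b" where
  "ganea_prod_fib z = (ganea_fib (fst z), ganea_fib (snd z))"

end

(*
  The path fibration has an explicit lifting function: a path h starting at the end point of a
  path w is lifted to time s by appending h restricted to [0, s] to w.  Applying it to every
  coordinate of nonzero weight of a point of a fiberwise join leaves the barycentric weights
  unchanged, so the result is continuous for the join topology and is a lifting function for
  every Ganea fibration.  Doing this in both factors of G_k X x G_k Y again leaves all weights
  unchanged, so each piece G_i X x G_(k-i) Y of the union is preserved.  Hence the map has the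
  homotopy lifting property for all spaces.
*)

theory Submission
  imports Defs
begin

definition compact_open_subbasis :: "'a topology \<Rightarrow> (real \<Rightarrow> 'a) set set" where
  "compact_open_subbasis X = {{w. w ` K \<subseteq> U} | K U. compactin unit_interval_top K \<and> openin X U}"

lemma path_space_eq:
  "path_space X x0 = subtopology (topology_generated_by (compact_open_subbasis X)) (path_pts X x0)"
  by (simp add: path_space_def compact_open_subbasis_def)

lemma UNIV_in_compact_open_subbasis: "UNIV \<in> compact_open_subbasis X"
proof -
  have "UNIV = {w :: real \<Rightarrow> 'a. w ` {} \<subseteq> {}}" by simp
  then show ?thesis unfolding compact_open_subbasis_def by force
qed

lemma topspace_path_space [simp]: "topspace (path_space X x0) = path_pts X x0"
  using UNIV_in_compact_open_subbasis[of X] by (auto simp: path_space_eq simp del: Collect_mem_eq)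

lemma continuous_map_path_space_curry:
  assumes G: "continuous_map (prod_topology Z unit_interval_top) X G"
    and G0: "\<And>z. z \<in> topspace Z \<Longrightarrow> G (z, 0) = x0"
  shows "continuous_map Z (path_space X x0) (\<lambda>z u. if u \<in> {0..1} then G (z, u) else undefined)"
    (is "continuous_map _ _ ?G")
  unfolding path_space_eq continuous_map_in_subtopology
proof
  show "?G \<in> topspace Z \<rightarrow> path_pts X x0"
  proof
    fix z assume z: "z \<in> topspace Z"
    have "continuous_map unit_interval_top X (G \<circ> Pair z)"
      by (rule continuous_map_compose[OF _ G]) (simp add: z continuous_map_pairwise o_def)
    then have "pathin X (?G z)"
      unfolding pathin_def by (rule continuous_map_eq) auto
    then show "?G z \<in> path_pts X x0"
      unfolding path_pts_def using G0[OF z] by auto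
  qed
next
  show "continuous_map Z (topology_generated_by (compact_open_subbasis X)) ?G"
  proof (rule continuous_on_generated_topo)
    fix S assume "S \<in> compact_open_subbasis X"
    then obtain C V where S: "S = {w. w ` C \<subseteq> V}"
      and C: "compactin unit_interval_top C" and V: "openin X V"
      unfolding compact_open_subbasis_def by blast
    have C01: "C \<subseteq> {0..1}" using C compactin_subset_topspace by fastforce
    let ?W = "{p \<in> topspace (prod_topology Z unit_interval_top). G p \<in> V}"
    have W: "openin (prod_topology Z unit_interval_top) ?W"
      using openin_continuous_map_preimage[OF G V] .
    have eq: "?G -` S \<inter> topspace Z = {z \<in> topspace Z. \<forall>u\<in>C. G (z, u) \<in> V}"
      using C01 unfolding S by (auto simp: image_subset_iff subset_iff)
    show "openin Z (?G -` S \<inter> topspace Z)"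
      unfolding eq
    proof (subst openin_subopen, intro ballI)
      fix z0 assume z0: "z0 \<in> {z \<in> topspace Z. \<forall>u\<in>C. G (z, u) \<in> V}"
      have "{z0} \<times> C \<subseteq> ?W" using z0 C01 by auto
      from tube_lemma_right[OF W C _ this] z0
      obtain U V' where "openin Z U" "z0 \<in> U" "C \<subseteq> V'" "U \<times> V' \<subseteq> ?W"
        by auto
      then show "\<exists>T. openin Z T \<and> z0 \<in> T \<and> T \<subseteq> {z \<in> topspace Z. \<forall>u\<in>C. G (z, u) \<in> V}"
        by (intro exI[of _ U]) (auto dest: openin_subset)
    qed
  qed (use UNIV_in_compact_open_subbasis in blast)
qed

lemma neighbourhood_base_compact_unit_interval:
  "neighbourhood_base_of (compactin unit_interval_top) unit_interval_top"
proof -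
  have "locally_compact_space unit_interval_top"
    by (simp add: compact_imp_locally_compact_space compact_space_subtopology compactin_subtopology)
  then show ?thesis
    by (simp add: locally_compact_space_neighbourhood_base Hausdorff_space_subtopology)
qed

lemma continuous_map_path_eval:
  "continuous_map (prod_topology (path_space X x0) unit_interval_top) X (\<lambda>(w, u). w u)"
  unfolding continuous_map_def
proof (intro conjI allI impI)
  show "(\<lambda>(w, u). w u) \<in> topspace (prod_topology (path_space X x0) unit_interval_top) \<rightarrow> topspace X"
    by (auto simp: path_pts_def pathin_def continuous_map_def)
next
  fix V assume V: "openin X V"
  let ?S = "{p \<in> topspace (prod_topology (path_space X x0) unit_interval_top). (case p of (w, u) \<Rightarrow> w u) \<in> V}"
  show "openin (prod_topology (path_space X x0) unit_interval_top) ?S"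
    unfolding openin_prod_topology_alt
  proof (intro allI impI)
    fix w0 u0 assume "(w0, u0) \<in> ?S"
    then have w0: "w0 \<in> path_pts X x0" and u0: "u0 \<in> {0..1}" and w0u0: "w0 u0 \<in> V"
      by auto
    have "openin unit_interval_top {u \<in> topspace unit_interval_top. w0 u \<in> V}"
      using w0 V unfolding path_pts_def pathin_def by (blast intro: openin_continuous_map_preimage)
    moreover have "u0 \<in> {u \<in> topspace unit_interval_top. w0 u \<in> V}"
      using u0 w0u0 by simp
    ultimately obtain U C where U: "openin unit_interval_top U" and C: "compactin unit_interval_top C"
      and "u0 \<in> U" "U \<subseteq> C" and CV: "C \<subseteq> {u \<in> topspace unit_interval_top. w0 u \<in> V}"
      using neighbourhood_base_compact_unit_interval unfolding neighbourhood_base_of by meson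
    have "openin (topology_generated_by (compact_open_subbasis X)) {w. w ` C \<subseteq> V}"
      by (rule topology_generated_by_Basis) (use C V in \<open>auto simp: compact_open_subbasis_def\<close>)
    then have "openin (path_space X x0) (path_pts X x0 \<inter> {w. w ` C \<subseteq> V})"
      unfolding path_space_eq by (simp add: openin_subtopology_Int2)
    moreover have "(path_pts X x0 \<inter> {w. w ` C \<subseteq> V}) \<times> U \<subseteq> ?S"
      using \<open>U \<subseteq> C\<close> openin_subset[OF U] by auto
    moreover have "w0 \<in> path_pts X x0 \<inter> {w. w ` C \<subseteq> V}"
      using w0 CV by auto
    ultimately show "\<exists>W U'. openin (path_space X x0) W \<and> openin unit_interval_top U' \<and>
        w0 \<in> W \<and> u0 \<in> U' \<and> W \<times> U' \<subseteq> ?S"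
      using U \<open>u0 \<in> U\<close> by blast
  qed
qed

lemma continuous_map_path_end: "continuous_map (path_space X x0) X path_end"
proof -
  have "continuous_map (path_space X x0) (prod_topology (path_space X x0) unit_interval_top) (\<lambda>w. (w, 1))"
    by (intro continuous_map_pairedI) auto
  from continuous_map_compose[OF this continuous_map_path_eval] show ?thesis
    by (simp add: o_def path_end_def[abs_def])
qed

definition path_extend :: "(real \<Rightarrow> 'a) \<Rightarrow> (real \<Rightarrow> 'a) \<Rightarrow> real \<Rightarrow> real \<Rightarrow> 'a" where
  "path_extend w h s = (\<lambda>u. if u \<in> {0..1}
     then (if (1 + s) * u \<le> 1 then w ((1 + s) * u) else h ((1 + s) * u - 1)) else undefined)"

lemma path_extend_0: "w \<in> path_pts X x0 \<Longrightarrow> path_extend w h 0 = w"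
  by (auto simp: path_extend_def path_pts_def fun_eq_iff)

lemma path_end_path_extend: "s \<in> {0..1} \<Longrightarrow> path_end w = h 0 \<Longrightarrow> path_end (path_extend w h s) = h s"
  by (auto simp: path_extend_def path_end_def)

lemma continuous_map_path_extend:
  assumes w: "continuous_map T (path_space X x0) w"
    and h: "continuous_map (prod_topology T unit_interval_top) X h"
    and wh: "\<And>k. k \<in> topspace T \<Longrightarrow> path_end (w k) = h (k, 0)"
  shows "continuous_map (prod_topology T unit_interval_top) (path_space X x0)
           (\<lambda>z. path_extend (w (fst z)) (\<lambda>v. h (fst z, v)) (snd z))"
proof -
  let ?P = "prod_topology (prod_topology T unit_interval_top) unit_interval_top"
  let ?p = "\<lambda>y. (1 + snd (fst y)) * snd y"
  let ?F1 = "\<lambda>y. w (fst (fst y)) (?p y)"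
  let ?F2 = "\<lambda>y. h (fst (fst y), ?p y - 1)"
  have p: "continuous_map ?P euclideanreal ?p"
    by (intro continuous_intros continuous_map_into_fulltopology[OF continuous_map_snd]
        continuous_map_into_fulltopology[OF continuous_map_compose[OF continuous_map_fst continuous_map_snd],
          unfolded o_def])
  have k: "continuous_map (subtopology ?P S) T (\<lambda>y. fst (fst y))" for S
    using continuous_map_from_subtopology[OF continuous_map_compose[OF continuous_map_fst continuous_map_fst]]
    by (simp add: o_def)
  have F1: "continuous_map (subtopology ?P {y \<in> topspace ?P. ?p y \<le> 1}) X ?F1"
  proof -
    have "?p y \<in> {0..1}" if "y \<in> topspace ?P" "?p y \<le> 1" for y
      using that by auto
    then have "continuous_map (subtopology ?P {y \<in> topspace ?P. ?p y \<le> 1})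
        (prod_topology (path_space X x0) unit_interval_top) (\<lambda>y. (w (fst (fst y)), ?p y))"
      using continuous_map_compose[OF k w] continuous_map_from_subtopology[OF p]
      by (intro continuous_map_pairedI) (auto simp: o_def continuous_map_in_subtopology)
    from continuous_map_compose[OF this continuous_map_path_eval] show ?thesis
      by (simp add: o_def)
  qed
  have F2: "continuous_map (subtopology ?P {y \<in> topspace ?P. 1 \<le> ?p y}) X ?F2"
  proof -
    have "?p y - 1 \<in> {0..1}" if "y \<in> topspace ?P" "1 \<le> ?p y" for y
    proof -
      have "?p y \<le> 1 + snd (fst y)"
        using that(1) by (auto intro: mult_left_le)
      then show ?thesis using that by auto
    qed
    then have "continuous_map (subtopology ?P {y \<in> topspace ?P. 1 \<le> ?p y})
        (prod_topology T unit_interval_top) (\<lambda>y. (fst (fst y), ?p y - 1))"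
      using k continuous_map_from_subtopology[OF p]
      by (intro continuous_map_pairedI) (auto simp: continuous_map_in_subtopology intro!: continuous_map_diff)
    from continuous_map_compose[OF this h] show ?thesis
      by (simp add: o_def)
  qed
  have "continuous_map ?P X (\<lambda>y. if ?p y \<le> 1 then ?F1 y else ?F2 y)"
    by (rule continuous_map_cases_le[OF p _ F1 F2]) (use wh in \<open>auto simp: path_end_def\<close>)
  then have "continuous_map (prod_topology T unit_interval_top) (path_space X x0)
      (\<lambda>z u. if u \<in> {0..1} then (if ?p (z, u) \<le> 1 then ?F1 (z, u) else ?F2 (z, u)) else undefined)"
    by (rule continuous_map_path_space_curry)
      (use continuous_map_image_subset_topspace[OF w] in \<open>auto simp: path_pts_def\<close>)
  then show ?thesis
    unfolding path_extend_def fst_conv snd_conv .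
qed

lemma topspace_fjoin [simp]: "topspace (fjoin E f n) = fjoin_pts E f n"
proof -
  have "fjoin_pts E f n \<in> {{z \<in> fjoin_pts E f n. fst z l \<in> U} | l U. open U}"
    by (rule CollectI, rule exI[of _ 0], rule exI[of _ UNIV]) auto
  then show ?thesis unfolding fjoin_def topology_generated_by_topspace by blast
qed

lemma fjoin_pts_component:
  "z \<in> fjoin_pts E f n \<Longrightarrow> fst z l \<noteq> 0 \<Longrightarrow> snd z l \<in> topspace E"
  by (cases z) (simp only: fjoin_pts_def mem_Collect_eq case_prod_conv prod.sel, blast)

lemma fjoin_pts_Least_weight_nonzero:
  assumes "z \<in> fjoin_pts E f n"
  shows "fst z (LEAST l. fst z l \<noteq> 0) \<noteq> 0"
proof (rule LeastI_ex)
  show "\<exists>l. fst z l \<noteq> 0"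
  proof (rule ccontr)
    assume "\<nexists>l. fst z l \<noteq> 0"
    then have "(\<Sum>l\<le>n. fst z l) = 0"
      by simp
    then show False
      using assms by (cases z) (simp add: fjoin_pts_def)
  qed
qed

lemma fjoin_proj_eq:
  assumes "z \<in> fjoin_pts E f n" "fst z l \<noteq> 0"
  shows "fjoin_proj f z = f (snd z l)"
proof -
  obtain t x where z: "z = (t, x)"
    by (cases z)
  have "\<forall>l l'. t l \<noteq> 0 \<and> t l' \<noteq> 0 \<longrightarrow> f (x l) = f (x l')"
    using assms(1) unfolding z fjoin_pts_def mem_Collect_eq case_prod_conv by blast
  moreover have "t (LEAST l. t l \<noteq> 0) \<noteq> 0"
    using fjoin_pts_Least_weight_nonzero[OF assms(1)] z by simp
  ultimately show ?thesis
    using assms(2) unfolding fjoin_proj_def z fst_conv snd_conv by blast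
qed

lemma fjoin_pts_same_weights:
  assumes "z \<in> fjoin_pts E f i" "z' \<in> fjoin_pts E f k" "fst z = fst z'"
  shows "z' \<in> fjoin_pts E f i"
proof -
  obtain t x t' x' where z: "z = (t, x)" and z': "z' = (t', x')"
    by (cases z, cases z')
  show ?thesis
    using assms unfolding z z' fjoin_pts_def mem_Collect_eq case_prod_conv fst_conv by blast
qed

lemma openin_fjoin_weight:
  "open U \<Longrightarrow> openin (fjoin E f n) {z \<in> fjoin_pts E f n. fst z l \<in> U}"
  unfolding fjoin_def by (rule topology_generated_by_Basis) blast

lemma openin_fjoin_component:
  "openin E V \<Longrightarrow> openin (fjoin E f n) {z \<in> fjoin_pts E f n. fst z l \<noteq> 0 \<and> snd z l \<in> V}"
  unfolding fjoin_def by (rule topology_generated_by_Basis) blast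

lemma continuous_map_fjoin_iff:
  "continuous_map T (fjoin E f n) F \<longleftrightarrow>
     F \<in> topspace T \<rightarrow> fjoin_pts E f n \<and>
     (\<forall>l. continuous_map T euclideanreal (\<lambda>z. fst (F z) l)) \<and>
     (\<forall>l. continuous_map (subtopology T {z \<in> topspace T. fst (F z) l \<noteq> 0}) E (\<lambda>z. snd (F z) l))"
  (is "_ \<longleftrightarrow> ?pts \<and> ?weights \<and> ?components")
proof
  assume F: "continuous_map T (fjoin E f n) F"
  then have pts: ?pts
    using continuous_map_image_subset_topspace by fastforce
  have "continuous_map T euclideanreal (\<lambda>z. fst (F z) l)" for l
    unfolding continuous_map_def
  proof (intro conjI allI impI)
    fix U :: "real set" assume "openin euclideanreal U"
    then have "openin T {z \<in> topspace T. F z \<in> {w \<in> fjoin_pts E f n. fst w l \<in> U}}"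
      by (intro openin_continuous_map_preimage[OF F] openin_fjoin_weight) simp
    moreover have "{z \<in> topspace T. F z \<in> {w \<in> fjoin_pts E f n. fst w l \<in> U}}
        = {z \<in> topspace T. fst (F z) l \<in> U}"
      using pts by auto
    ultimately show "openin T {z \<in> topspace T. fst (F z) l \<in> U}"
      by simp
  qed simp
  moreover have "continuous_map (subtopology T {z \<in> topspace T. fst (F z) l \<noteq> 0}) E (\<lambda>z. snd (F z) l)" for l
    unfolding continuous_map_def
  proof (intro conjI allI impI)
    show "(\<lambda>z. snd (F z) l) \<in> topspace (subtopology T {z \<in> topspace T. fst (F z) l \<noteq> 0}) \<rightarrow> topspace E"
      using pts fjoin_pts_component by fastforce
    fix V assume "openin E V"
    then have "openin T {z \<in> topspace T. F z \<in> {w \<in> fjoin_pts E f n. fst w l \<noteq> 0 \<and> snd w l \<in> V}}"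
      by (intro openin_continuous_map_preimage[OF F] openin_fjoin_component)
    then show "openin (subtopology T {z \<in> topspace T. fst (F z) l \<noteq> 0})
        {z \<in> topspace (subtopology T {z \<in> topspace T. fst (F z) l \<noteq> 0}). snd (F z) l \<in> V}"
      using pts by (auto simp: openin_subtopology elim!: rev_iffD1[OF _ arg_cong[where f = "openin T"]])
  qed
  ultimately show "?pts \<and> ?weights \<and> ?components"
    using pts by blast
next
  assume "?pts \<and> ?weights \<and> ?components"
  then have pts: ?pts and weights: ?weights and components: ?components
    by blast+
  have nonzero_open: "openin T {z \<in> topspace T. fst (F z) l \<noteq> 0}" for l
    using openin_continuous_map_preimage[OF weights[rule_format], of "-{0}"] by auto
  show "continuous_map T (fjoin E f n) F"
    unfolding fjoin_def
  proof (rule continuous_on_generated_topo)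
    fix S
    assume "S \<in> {{z \<in> fjoin_pts E f n. fst z l \<in> U} | l U. open U}
      \<union> {{z \<in> fjoin_pts E f n. fst z l \<noteq> 0 \<and> snd z l \<in> V} | l V. openin E V}"
    then consider (weight) l U where "S = {z \<in> fjoin_pts E f n. fst z l \<in> U}" "open U"
      | (component) l V where "S = {z \<in> fjoin_pts E f n. fst z l \<noteq> 0 \<and> snd z l \<in> V}" "openin E V"
      by blast
    then show "openin T (F -` S \<inter> topspace T)"
    proof cases
      case weight
      then have "F -` S \<inter> topspace T = {z \<in> topspace T. fst (F z) l \<in> U}"
        using pts by auto
      then show ?thesis
        using openin_continuous_map_preimage[OF weights[rule_format] open_openin[THEN iffD1, OF weight(2)]]
        by simp
    next
      case component
      have "openin (subtopology T {z \<in> topspace T. fst (F z) l \<noteq> 0})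
          {z \<in> topspace (subtopology T {z \<in> topspace T. fst (F z) l \<noteq> 0}). snd (F z) l \<in> V}"
        by (rule openin_continuous_map_preimage[OF components[rule_format] component(2)])
      moreover have "F -` S \<inter> topspace T =
          {z \<in> topspace (subtopology T {z \<in> topspace T. fst (F z) l \<noteq> 0}). snd (F z) l \<in> V}"
        using pts component(1) by auto
      ultimately show ?thesis
        using openin_open_subtopology[OF nonzero_open] by auto
    qed
  next
    show "F ` topspace T \<subseteq> \<Union> ({{z \<in> fjoin_pts E f n. fst z l \<in> U} | l U. open U}
      \<union> {{z \<in> fjoin_pts E f n. fst z l \<noteq> 0 \<and> snd z l \<in> V} | l V. openin E V})"
      using pts topspace_fjoin[of E f n] unfolding fjoin_def topology_generated_by_topspace by blast
  qed
qed

lemma continuous_map_fjoin_proj: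
  assumes f: "continuous_map E B f"
  shows "continuous_map (fjoin E f n) B (fjoin_proj f)"
  unfolding continuous_map_def
proof (intro conjI allI impI)
  show "fjoin_proj f \<in> topspace (fjoin E f n) \<rightarrow> topspace B"
    using f fjoin_pts_component fjoin_pts_Least_weight_nonzero
    by (fastforce simp: fjoin_proj_def continuous_map_def)
next
  fix V assume V: "openin B V"
  let ?V' = "{e \<in> topspace E. f e \<in> V}"
  have eq: "{z \<in> topspace (fjoin E f n). fjoin_proj f z \<in> V}
     = (\<Union>l. {z \<in> fjoin_pts E f n. fst z l \<noteq> 0 \<and> snd z l \<in> ?V'})"
    using fjoin_proj_eq fjoin_pts_component fjoin_pts_Least_weight_nonzero by fastforce
  show "openin (fjoin E f n) {z \<in> topspace (fjoin E f n). fjoin_proj f z \<in> V}"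
    unfolding eq
    by (intro openin_Union) (use openin_fjoin_component[OF openin_continuous_map_preimage[OF f V]] in blast)
qed

text \<open>\<open>L e h s\<close> is the position at time \<open>s\<close> of a lift of the path \<open>h\<close> starting at \<open>e\<close>,
  depending continuously on all data parametrised by a space of type \<open>'c\<close>: Hurewicz's lifting
  function, without topologising the paths in \<open>B\<close>.\<close>

definition lifting_function ::
  "'c itself \<Rightarrow> 'e topology \<Rightarrow> 'b topology \<Rightarrow> ('e \<Rightarrow> 'b) \<Rightarrow> ('e \<Rightarrow> (real \<Rightarrow> 'b) \<Rightarrow> real \<Rightarrow> 'e) \<Rightarrow> bool"
where
  "lifting_function (ty :: 'c itself) E B p L \<longleftrightarrow>
     (\<forall>e h. e \<in> topspace E \<longrightarrow> L e h 0 = e) \<and>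
     (\<forall>e h s. e \<in> topspace E \<and> p e = h 0 \<and> s \<in> {0..1} \<longrightarrow> p (L e h s) = h s) \<and>
     (\<forall>(T :: 'c topology) w H. continuous_map T E w \<and>
        continuous_map (prod_topology T unit_interval_top) B H \<and>
        (\<forall>k \<in> topspace T. p (w k) = H (k, 0)) \<longrightarrow>
        continuous_map (prod_topology T unit_interval_top) E
          (\<lambda>z. L (w (fst z)) (\<lambda>v. H (fst z, v)) (snd z)))"

lemma lifting_functionD:
  assumes "lifting_function TYPE('c) E B p L"
  shows "e \<in> topspace E \<Longrightarrow> L e h 0 = e"
    and "e \<in> topspace E \<Longrightarrow> p e = h 0 \<Longrightarrow> s \<in> {0..1} \<Longrightarrow> p (L e h s) = h s"
    and "continuous_map (T :: 'c topology) E w \<Longrightarrow>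
      continuous_map (prod_topology T unit_interval_top) B H \<Longrightarrow>
      (\<And>k. k \<in> topspace T \<Longrightarrow> p (w k) = H (k, 0)) \<Longrightarrow>
      continuous_map (prod_topology T unit_interval_top) E (\<lambda>z. L (w (fst z)) (\<lambda>v. H (fst z, v)) (snd z))"
  using assms unfolding lifting_function_def by blast+

lemma lifting_functionI:
  assumes "\<And>e h. e \<in> topspace E \<Longrightarrow> L e h 0 = e"
    and "\<And>e h s. e \<in> topspace E \<Longrightarrow> p e = h 0 \<Longrightarrow> s \<in> {0..1} \<Longrightarrow> p (L e h s) = h s"
    and "\<And>(T :: 'c topology) w H. continuous_map T E w \<Longrightarrow>
      continuous_map (prod_topology T unit_interval_top) B H \<Longrightarrow>
      (\<And>k. k \<in> topspace T \<Longrightarrow> p (w k) = H (k, 0)) \<Longrightarrow>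
      continuous_map (prod_topology T unit_interval_top) E (\<lambda>z. L (w (fst z)) (\<lambda>v. H (fst z, v)) (snd z))"
  shows "lifting_function TYPE('c) E B p L"
  using assms unfolding lifting_function_def by blast

lemma homotopy_lifting_lifting_function:
  assumes L: "lifting_function TYPE('c) E B p L"
  shows "homotopy_lifting (K :: 'c topology) E B p"
  unfolding homotopy_lifting_def
proof (intro allI impI, elim conjE)
  fix f H
  assume f: "continuous_map K E f"
    and H: "continuous_map (prod_topology K unit_interval_top) B H"
    and H0: "\<forall>k\<in>topspace K. H (k, 0) = p (f k)"
  have fE: "f k \<in> topspace E" if "k \<in> topspace K" for k
    using f that by (simp add: continuous_map_def Pi_iff)
  show "\<exists>H'. continuous_map (prod_topology K unit_interval_top) E H' \<and>
      (\<forall>z\<in>topspace (prod_topology K unit_interval_top). p (H' z) = H z) \<and>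
      (\<forall>k\<in>topspace K. H' (k, 0) = f k)"
  proof (intro exI conjI ballI)
    show "continuous_map (prod_topology K unit_interval_top) E
        (\<lambda>z. L (f (fst z)) (\<lambda>v. H (fst z, v)) (snd z))"
      using lifting_functionD(3)[OF L f H] H0 by simp
    show "p (L (f (fst z)) (\<lambda>v. H (fst z, v)) (snd z)) = H z"
      if "z \<in> topspace (prod_topology K unit_interval_top)" for z
      using that lifting_functionD(2)[OF L fE] H0 by (auto simp: mem_Times_iff)
    show "L (f (fst (k, 0))) (\<lambda>v. H (fst (k, 0), v)) (snd (k, 0)) = f k"
      if "k \<in> topspace K" for k
      using lifting_functionD(1)[OF L fE[OF that]] by simp
  qed
qed

lemma lifting_function_path_end:
  "lifting_function TYPE('c) (path_space X x0) X path_end path_extend"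
proof (rule lifting_functionI)
  show "continuous_map (prod_topology T unit_interval_top) (path_space X x0)
      (\<lambda>z. path_extend (w (fst z)) (\<lambda>v. H (fst z, v)) (snd z))"
    if "continuous_map T (path_space X x0) w"
      and "continuous_map (prod_topology T unit_interval_top) X H"
      and "\<And>k. k \<in> topspace T \<Longrightarrow> path_end (w k) = H (k, 0)"
    for T :: "'c topology" and w H
    using that by (rule continuous_map_path_extend)
qed (auto simp: path_extend_0 path_end_path_extend)

definition fjoin_lift :: "('e \<Rightarrow> (real \<Rightarrow> 'b) \<Rightarrow> real \<Rightarrow> 'e) \<Rightarrow>
    (nat \<Rightarrow> real) \<times> (nat \<Rightarrow> 'e) \<Rightarrow> (real \<Rightarrow> 'b) \<Rightarrow> real \<Rightarrow> (nat \<Rightarrow> real) \<times> (nat \<Rightarrow> 'e)" where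
  "fjoin_lift L z h s = (fst z, \<lambda>l. if fst z l = 0 then undefined else L (snd z l) h s)"

lemma fjoin_lift_0:
  assumes L: "lifting_function TYPE('c) E B f L" and z: "z \<in> fjoin_pts E f n"
  shows "fjoin_lift L z h 0 = z"
proof -
  have "snd z l = undefined" if "fst z l = 0" for l
    using z that by (cases z) (simp add: fjoin_pts_def)
  then show ?thesis
    using lifting_functionD(1)[OF L fjoin_pts_component[OF z]]
    by (cases z) (auto simp: fjoin_lift_def fun_eq_iff)
qed

lemma fjoin_proj_fjoin_lift:
  assumes L: "lifting_function TYPE('c) E B f L" and z: "z \<in> fjoin_pts E f n"
    and h0: "fjoin_proj f z = h 0" and s: "s \<in> {0..1}"
  shows "fjoin_proj f (fjoin_lift L z h s) = h s"
proof -
  let ?m = "LEAST l. fst z l \<noteq> 0"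
  have m: "fst z ?m \<noteq> 0"
    by (rule fjoin_pts_Least_weight_nonzero[OF z])
  have "fjoin_proj f (fjoin_lift L z h s) = f (L (snd z ?m) h s)"
    using m by (simp add: fjoin_proj_def fjoin_lift_def)
  also have "\<dots> = h s"
    using lifting_functionD(2)[OF L fjoin_pts_component[OF z m] _ s] fjoin_proj_eq[OF z m] h0
    by simp
  finally show ?thesis .
qed

lemma continuous_map_fjoin_lift:
  assumes L: "lifting_function TYPE('c) E B f L"
    and g: "continuous_map (T :: 'c topology) (fjoin E f n) g"
    and h: "continuous_map (prod_topology T unit_interval_top) B h"
    and gh: "\<And>k. k \<in> topspace T \<Longrightarrow> fjoin_proj f (g k) = h (k, 0)"
  shows "continuous_map (prod_topology T unit_interval_top) (fjoin E f n)
           (\<lambda>z. fjoin_lift L (g (fst z)) (\<lambda>v. h (fst z, v)) (snd z))"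
    (is "continuous_map ?TI _ ?G")
proof -
  define supp where "supp l = {k \<in> topspace T. fst (g k) l \<noteq> 0}" for l
  have g_pts: "g \<in> topspace T \<rightarrow> fjoin_pts E f n"
    and weights: "\<And>l. continuous_map T euclideanreal (\<lambda>k. fst (g k) l)"
    and components: "\<And>l. continuous_map (subtopology T (supp l)) E (\<lambda>k. snd (g k) l)"
    using g unfolding continuous_map_fjoin_iff supp_def by blast+
  have lift: "continuous_map (prod_topology (subtopology T (supp l)) unit_interval_top) E
      (\<lambda>z. L (snd (g (fst z)) l) (\<lambda>v. h (fst z, v)) (snd z))" for l
  proof (rule lifting_functionD(3)[OF L components])
    show "continuous_map (prod_topology (subtopology T (supp l)) unit_interval_top) B h"
      unfolding prod_topology_subtopology(1) by (rule continuous_map_from_subtopology[OF h])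
    show "f (snd (g k) l) = h (k, 0)" if "k \<in> topspace (subtopology T (supp l))" for k
      using that g_pts gh fjoin_proj_eq by (fastforce simp: supp_def)
  qed
  have nonzero: "subtopology ?TI {z \<in> topspace ?TI. fst (?G z) l \<noteq> 0}
      = prod_topology (subtopology T (supp l)) unit_interval_top" for l
  proof -
    have "{z \<in> topspace ?TI. fst (?G z) l \<noteq> 0} = supp l \<times> topspace unit_interval_top"
      by (auto simp: supp_def fjoin_lift_def)
    then show ?thesis
      by (simp only: prod_topology_subtopology(1))
  qed
  have "?G z \<in> fjoin_pts E f n" if "z \<in> topspace ?TI" for z
  proof -
    obtain k s where z: "z = (k, s)"
      by (cases z)
    then have k: "k \<in> topspace T" and s: "s \<in> {0..1}"
      using that by auto
    have "L (snd (g k) l) (\<lambda>v. h (k, v)) s \<in> topspace E" if "fst (g k) l \<noteq> 0" for l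
      using continuous_map_image_subset_topspace[OF lift[of l]] k s that by (force simp: supp_def)
    moreover have "f (L (snd (g k) l) (\<lambda>v. h (k, v)) s) = h (k, s)" if "fst (g k) l \<noteq> 0" for l
      using lifting_functionD(2)[OF L fjoin_pts_component _ s] g_pts gh fjoin_proj_eq k that
      by (metis PiE)
    ultimately show ?thesis
      using g_pts k unfolding z fjoin_lift_def fjoin_pts_def by (auto simp: Pi_iff)
  qed
  moreover have "continuous_map (subtopology ?TI {z \<in> topspace ?TI. fst (?G z) l \<noteq> 0}) E
      (\<lambda>z. snd (?G z) l)" for l
    unfolding nonzero
    by (rule continuous_map_eq[OF lift]) (auto simp: fjoin_lift_def supp_def)
  moreover have "continuous_map ?TI euclideanreal (\<lambda>z. fst (?G z) l)" for l
    using continuous_map_compose[OF continuous_map_fst weights[of l]]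
    by (simp add: fjoin_lift_def o_def)
  ultimately show ?thesis
    unfolding continuous_map_fjoin_iff by blast
qed

lemma lifting_function_fjoin:
  assumes L: "lifting_function TYPE('c) E B f L"
  shows "lifting_function TYPE('c) (fjoin E f n) B (fjoin_proj f) (fjoin_lift L)"
  by (rule lifting_functionI)
    (simp_all add: fjoin_lift_0[OF L] fjoin_proj_fjoin_lift[OF L] continuous_map_fjoin_lift[OF L])

definition prod_lift :: "('e \<Rightarrow> (real \<Rightarrow> 'b) \<Rightarrow> real \<Rightarrow> 'e) \<Rightarrow> ('e' \<Rightarrow> (real \<Rightarrow> 'b') \<Rightarrow> real \<Rightarrow> 'e') \<Rightarrow>
    'e \<times> 'e' \<Rightarrow> (real \<Rightarrow> 'b \<times> 'b') \<Rightarrow> real \<Rightarrow> 'e \<times> 'e'" where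
  "prod_lift L1 L2 e h s = (L1 (fst e) (\<lambda>v. fst (h v)) s, L2 (snd e) (\<lambda>v. snd (h v)) s)"

lemma lifting_function_prod:
  assumes L1: "lifting_function TYPE('c) E1 B1 p1 L1"
    and L2: "lifting_function TYPE('c) E2 B2 p2 L2"
  shows "lifting_function TYPE('c) (prod_topology E1 E2) (prod_topology B1 B2)
           (\<lambda>e. (p1 (fst e), p2 (snd e))) (prod_lift L1 L2)"
proof (rule lifting_functionI)
  show "prod_lift L1 L2 e h 0 = e" if "e \<in> topspace (prod_topology E1 E2)" for e h
    using that lifting_functionD(1)[OF L1] lifting_functionD(1)[OF L2] by (auto simp: prod_lift_def)
  show "(p1 (fst (prod_lift L1 L2 e h s)), p2 (snd (prod_lift L1 L2 e h s))) = h s"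
    if "e \<in> topspace (prod_topology E1 E2)" "(p1 (fst e), p2 (snd e)) = h 0" "s \<in> {0..1}" for e h s
    using that lifting_functionD(2)[OF L1] lifting_functionD(2)[OF L2]
    by (auto simp: prod_lift_def prod_eq_iff)
  show "continuous_map (prod_topology T unit_interval_top) (prod_topology E1 E2)
      (\<lambda>z. prod_lift L1 L2 (w (fst z)) (\<lambda>v. H (fst z, v)) (snd z))"
    if w: "continuous_map T (prod_topology E1 E2) w"
      and H: "continuous_map (prod_topology T unit_interval_top) (prod_topology B1 B2) H"
      and wH: "\<And>k. k \<in> topspace T \<Longrightarrow> (p1 (fst (w k)), p2 (snd (w k))) = H (k, 0)"
    for T :: "'c topology" and w H
  proof -
    have w1: "continuous_map T E1 (\<lambda>k. fst (w k))" and w2: "continuous_map T E2 (\<lambda>k. snd (w k))"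
      using w by (simp_all add: continuous_map_pairwise o_def)
    have H1: "continuous_map (prod_topology T unit_interval_top) B1 (\<lambda>z. fst (H z))"
      and H2: "continuous_map (prod_topology T unit_interval_top) B2 (\<lambda>z. snd (H z))"
      using H by (simp_all add: continuous_map_pairwise o_def)
    have "p1 (fst (w k)) = fst (H (k, 0))" "p2 (snd (w k)) = snd (H (k, 0))" if "k \<in> topspace T" for k
      by (simp_all add: wH[OF that, symmetric])
    then show ?thesis
      using lifting_functionD(3)[OF L1 w1 H1] lifting_functionD(3)[OF L2 w2 H2]
      by (simp add: prod_lift_def continuous_map_paired)
  qed
qed

lemma lifting_function_subtopology:
  assumes L: "lifting_function TYPE('c) E B p L"
    and stable: "\<And>e h s. e \<in> S \<Longrightarrow> L e h s \<in> topspace E \<Longrightarrow> L e h s \<in> S"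
  shows "lifting_function TYPE('c) (subtopology E S) B p L"
proof (rule lifting_functionI)
  show "continuous_map (prod_topology T unit_interval_top) (subtopology E S)
      (\<lambda>z. L (w (fst z)) (\<lambda>v. H (fst z, v)) (snd z))"
    if w: "continuous_map T (subtopology E S) w"
      and H: "continuous_map (prod_topology T unit_interval_top) B H"
      and wH: "\<And>k. k \<in> topspace T \<Longrightarrow> p (w k) = H (k, 0)"
    for T :: "'c topology" and w H
  proof -
    let ?W = "\<lambda>z. L (w (fst z)) (\<lambda>v. H (fst z, v)) (snd z)"
    have W: "continuous_map (prod_topology T unit_interval_top) E ?W"
      using lifting_functionD(3)[OF L continuous_map_into_fulltopology[OF w] H] wH by simp
    moreover have "?W z \<in> S" if "z \<in> topspace (prod_topology T unit_interval_top)" for z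
    proof (rule stable)
      show "w (fst z) \<in> S"
        using continuous_map_image_subset_topspace[OF w] that by auto
      show "?W z \<in> topspace E"
        using continuous_map_image_subset_topspace[OF W] that by blast
    qed
    ultimately show ?thesis
      by (simp add: continuous_map_in_subtopology Pi_iff)
  qed
qed (use lifting_functionD(1,2)[OF L] in auto)

lemma continuous_map_ganea_fib: "continuous_map (ganea X x0 n) X ganea_fib"
  unfolding ganea_def ganea_fib_def[abs_def] by (rule continuous_map_fjoin_proj[OF continuous_map_path_end])

lemma continuous_map_ganea_prod_fib:
  "continuous_map (ganea_prod X x0 Y y0 k) (prod_topology X Y) ganea_prod_fib"
  unfolding ganea_prod_def ganea_prod_fib_def[abs_def]
  by (intro continuous_map_from_subtopology continuous_map_pairedI
      continuous_map_compose[OF continuous_map_fst continuous_map_ganea_fib, unfolded o_def]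
      continuous_map_compose[OF continuous_map_snd continuous_map_ganea_fib, unfolded o_def])

lemma lifting_function_ganea:
  "lifting_function TYPE('c) (ganea X x0 n) X ganea_fib (fjoin_lift path_extend)"
  unfolding ganea_def ganea_fib_def[abs_def]
  by (rule lifting_function_fjoin[OF lifting_function_path_end])

lemma lifting_function_ganea_prod:
  "lifting_function TYPE('c) (ganea_prod X x0 Y y0 k) (prod_topology X Y) ganea_prod_fib
     (prod_lift (fjoin_lift path_extend) (fjoin_lift path_extend))"
  unfolding ganea_prod_def ganea_prod_fib_def[abs_def]
proof (rule lifting_function_subtopology[OF lifting_function_prod[OF lifting_function_ganea lifting_function_ganea]])
  let ?lift = "prod_lift (fjoin_lift path_extend) (fjoin_lift path_extend)"
  show "?lift e h s \<in> (\<Union>i\<le>k. topspace (ganea X x0 i) \<times> topspace (ganea Y y0 (k - i)))"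
    if "e \<in> (\<Union>i\<le>k. topspace (ganea X x0 i) \<times> topspace (ganea Y y0 (k - i)))"
      and "?lift e h s \<in> topspace (prod_topology (ganea X x0 k) (ganea Y y0 k))"
    for e h s
  proof -
    from that(1) obtain i where i: "i \<in> {..k}"
      and "e \<in> topspace (ganea X x0 i) \<times> topspace (ganea Y y0 (k - i))"
      by (rule UN_E)
    then have e: "fst e \<in> fjoin_pts (path_space X x0) path_end i"
        "snd e \<in> fjoin_pts (path_space Y y0) path_end (k - i)"
      by (simp_all add: ganea_def mem_Times_iff)
    have e': "fst (?lift e h s) \<in> fjoin_pts (path_space X x0) path_end k"
        "snd (?lift e h s) \<in> fjoin_pts (path_space Y y0) path_end k"
      using that(2) by (auto simp: ganea_def)
    have "fst (fst e) = fst (fst (?lift e h s))" "fst (snd e) = fst (snd (?lift e h s))"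
      by (simp_all add: prod_lift_def fjoin_lift_def)
    then have "fst (?lift e h s) \<in> topspace (ganea X x0 i)"
        "snd (?lift e h s) \<in> topspace (ganea Y y0 (k - i))"
      using fjoin_pts_same_weights[OF e(1) e'(1)] fjoin_pts_same_weights[OF e(2) e'(2)]
      by (simp_all add: ganea_def)
    then show ?thesis
      using i by (auto intro!: bexI[of _ i] simp: mem_Times_iff)
  qed
qed

theorem mainTheorem7:
  fixes X :: "'a topology" and Y :: "'b topology" and x0 :: 'a and y0 :: 'b and k :: nat
  assumes "cw_complex X" and "cw_complex Y"
    and "path_connected_space X" and "path_connected_space Y"
    and "x0 \<in> topspace X" and "y0 \<in> topspace Y"
  shows "serre_fibration TYPE('c) (ganea_prod X x0 Y y0 k) (prod_topology X Y) ganea_prod_fib"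
  unfolding serre_fibration_def
  by (simp add: continuous_map_ganea_prod_fib homotopy_lifting_lifting_function[OF lifting_function_ganea_prod])

end
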